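(* Let $\mathbf A\in\mathbb{R}^{N\times N}$, $\mathbf B,\mathbf C\in\mathbb{R}^{N\times n_s}$, fix a sign $\pm$, and let $\mathbf U\in\mathbb{R}^{N\times n}$ be a POD basis with columns $\mathbf u_1,\dots,\mathbf u_n$. Set $\hat{\mathbf A}=\mathbf U^\intercal\mathbf A\mathbf U\in\mathbb{R}^{n\times n}$, $\hat{\mathbf B}=\mathbf U^\intercal\mathbf B$, $\hat{\mathbf C}=\mathbf U^\intercal\mathbf C\in\mathbb{R}^{n\times n_s}$, and suppose $\hat{\mathbf D}\in\mathbb{R}^{n\times n}$ is the unique solution of \[\operatorname*{argmin}_{\mathbf D\in\mathbb{R}^{n\times n}}\|\hat{\mathbf C}-\hat{\mathbf A}\mathbf D\hat{\mathbf B}\|^2\quad\text{subject to}\quad\mathbf D^\intercal=\pm\mathbf D.\] Let $n'<n$, let $\mathbf U'\in\mathbb{R}^{N\times n'}$ consist of the first $n'$ columns of $\mathbf U$ (i.e. the $n-n'$ highest-frequency basis vectors removed), and set $\hat{\mathbf A}'=\mathbf U'^\intercal\mathbf A\mathbf U'$, $\hat{\mathbf B}'=\mathbf U'^\intercal\mathbf B$, $\hat{\mathbf C}'=\mathbf U'^\intercal\mathbf C$, and let $\hat{\mathbf D}'$ be the top-left $n'\times n'$ submatrix of $\hat{\mathbf D}$. If $\hat{\mathbf A}$ and $\hat{\mathbf B}\hat{\mathbf B}^\intercal$ are both diagonal, then the unique solution of \[\operatorname*{argmin}_{\mathbf D\in\mathbb{R}^{n'\times n'}}\|\hat{\mathbf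 C}'-\hat{\mathbf A}'\mathbf D\hat{\mathbf B}'\|^2\quad\text{subject to}\quad\mathbf D^\intercal=\pm\mathbf D\] is given by the truncation $\hat{\mathbf D}'$.
   Context: A POD basis is a matrix $\mathbf U\in\mathbb{R}^{N\times n}$ whose columns are the first $n$ left singular vectors (ordered by decreasing singular value) of a snapshot data matrix; in particular $\mathbf U^\intercal\mathbf U=\mathbf I$. $\|\cdot\|$ is the Frobenius norm. *)

theory Defs
  imports "Jordan_Normal_Form.Matrix"
begin

definition frob_sq :: "real mat \<Rightarrow> real" where
  "frob_sq M = (\<Sum>i<dim_row M. \<Sum>j<dim_col M. (M $$ (i,j))^2)"

definition first_cols :: "nat \<Rightarrow> 'a mat \<Rightarrow> 'a mat" where
  "first_cols k M = mat (dim_row M) k (\<lambda>(i,j). M $$ (i,j))"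

definition top_left :: "nat \<Rightarrow> 'a mat \<Rightarrow> 'a mat" where
  "top_left k M = mat k k (\<lambda>(i,j). M $$ (i,j))"

definition is_POD_basis :: "real mat \<Rightarrow> real mat \<Rightarrow> nat \<Rightarrow> nat \<Rightarrow> bool" where
  "is_POD_basis U X N n \<longleftrightarrow> n \<le> N \<and> dim_row X = N \<and>
     (\<exists>W S V. W \<in> carrier_mat N N \<and> V \<in> carrier_mat (dim_col X) (dim_col X) \<and>
        S \<in> carrier_mat N (dim_col X) \<and>
        transpose_mat W * W = 1\<^sub>m N \<and> transpose_mat V * V = 1\<^sub>m (dim_col X) \<and>
        (\<forall>i<N. \<forall>j<dim_col X. i \<noteq> j \<longrightarrow> S $$ (i,j) = 0) \<and>
        (\<forall>i<min N (dim_col X). S $$ (i,i) \<ge> 0) \<and>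
        (\<forall>i j. i \<le> j \<longrightarrow> j < min N (dim_col X) \<longrightarrow> S $$ (j,j) \<le> S $$ (i,i)) \<and>
        X = W * S * transpose_mat V \<and>
        U = first_cols n W)"

definition ls_obj :: "real mat \<Rightarrow> real mat \<Rightarrow> real mat \<Rightarrow> real mat \<Rightarrow> real" where
  "ls_obj C A B D = frob_sq (C - A * D * B)"

definition feasible :: "real \<Rightarrow> nat \<Rightarrow> real mat \<Rightarrow> bool" where
  "feasible s m D \<longleftrightarrow> D \<in> carrier_mat m m \<and> transpose_mat D = s \<cdot>\<^sub>m D"

definition is_unique_argmin ::
  "real mat \<Rightarrow> real mat \<Rightarrow> real mat \<Rightarrow> real \<Rightarrow> nat \<Rightarrow> real mat \<Rightarrow> bool" where
  "is_unique_argmin C A B s m D0 \<longleftrightarrow>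
     feasible s m D0 \<and>
     (\<forall>D. feasible s m D \<longrightarrow> ls_obj C A B D0 \<le> ls_obj C A B D) \<and>
     (\<forall>D. feasible s m D \<longrightarrow> ls_obj C A B D \<le> ls_obj C A B D0 \<longrightarrow> D = D0)"

end

theory Submission
  imports Defs
begin

text \<open>For the reduced matrices: when \<open>A\<close> is diagonal and the rows \<open>b\<^sub>j\<close> of \<open>B\<close> are mutually orthogonal,
  \<open>\<parallel>C - A D B\<parallel>\<^sup>2\<close> is \<open>\<parallel>C\<parallel>\<^sup>2\<close> plus a sum of independent terms, one for each entry \<open>D\<^sub>i\<^sub>j\<close>,
  which depend only on \<open>A\<^sub>i\<^sub>i\<close>, \<open>\<parallel>b\<^sub>j\<parallel>\<^sup>2\<close> and \<open>\<langle>c\<^sub>i, b\<^sub>j\<rangle>\<close>. Dropping trailing basis vectors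
  only deletes rows of \<open>B\<close> and \<open>C\<close> and rows and columns of \<open>A\<close>, so the truncated objective is
  the same sum restricted to the top-left block. Pasting a feasible competitor \<open>D'\<close> into the top-left
  block of \<open>D\<close> preserves \<open>D\<^sup>T = \<plusminus>D\<close> and changes both objectives by the same amount, so
  optimality and uniqueness transfer from \<open>D\<close> to its truncation.\<close>

definition first_rows :: "nat \<Rightarrow> 'a mat \<Rightarrow> 'a mat" where
  "first_rows k M = mat k (dim_col M) (\<lambda>(i,j). M $$ (i,j))"

lemma first_rows_index [simp]:
  "dim_row (first_rows k M) = k" "dim_col (first_rows k M) = dim_col M"
  "i < k \<Longrightarrow> j < dim_col M \<Longrightarrow> first_rows k M $$ (i,j) = M $$ (i,j)"
  by (simp_all add: first_rows_def)

lemma first_cols_index [simp]: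
  "dim_row (first_cols k M) = dim_row M" "dim_col (first_cols k M) = k"
  "i < dim_row M \<Longrightarrow> j < k \<Longrightarrow> first_cols k M $$ (i,j) = M $$ (i,j)"
  by (simp_all add: first_cols_def)

lemma top_left_index [simp]:
  "dim_row (top_left k M) = k" "dim_col (top_left k M) = k"
  "i < k \<Longrightarrow> j < k \<Longrightarrow> top_left k M $$ (i,j) = M $$ (i,j)"
  by (simp_all add: top_left_def)

lemma top_left_carrier [simp]: "top_left k M \<in> carrier_mat k k"
  by (simp add: top_left_def)

lemma row_first_rows: "i < k \<Longrightarrow> i < dim_row M \<Longrightarrow> row (first_rows k M) i = row M i"
  by (auto simp: first_rows_def)

lemma col_first_cols: "j < k \<Longrightarrow> j < dim_col M \<Longrightarrow> col (first_cols k M) j = col M j"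
  by (auto simp: first_cols_def)

lemma transpose_first_cols:
  "k \<le> dim_col U \<Longrightarrow> transpose_mat (first_cols k U) = first_rows k (transpose_mat U)"
  by (auto simp: first_cols_def first_rows_def)

lemma first_rows_mult:
  "k \<le> dim_row P \<Longrightarrow> first_rows k P * M = first_rows k (P * M)"
  by (rule eq_matI) (auto simp: row_first_rows)

lemma mult_first_cols:
  "k \<le> dim_col Q \<Longrightarrow> M * first_cols k Q = first_cols k (M * Q)"
  by (rule eq_matI) (auto simp: col_first_cols)

lemma first_cols_first_rows:
  "k \<le> dim_col M \<Longrightarrow> first_cols k (first_rows k M) = top_left k M"
  by (auto simp: first_cols_def first_rows_def top_left_def)

lemma first_rows_mult_transpose:
  assumes "k \<le> dim_row M" "k \<le> dim_row P"
  shows "first_rows k M * transpose_mat (first_rows k P) = top_left k (M * transpose_mat P)"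
  using assms by (intro eq_matI) (auto simp: top_left_def row_first_rows)

lemma transpose_first_cols_mult:
  "k \<le> dim_col U \<Longrightarrow> transpose_mat (first_cols k U) * M = first_rows k (transpose_mat U * M)"
  by (simp add: transpose_first_cols first_rows_mult)

lemma compress_first_cols:
  "k \<le> dim_col U \<Longrightarrow>
    transpose_mat (first_cols k U) * A * first_cols k U = top_left k (transpose_mat U * A * U)"
  by (simp add: transpose_first_cols_mult mult_first_cols first_rows_mult first_cols_first_rows)

lemma diagonal_mat_top_left:
  assumes "diagonal_mat A" "k \<le> dim_row A" "k \<le> dim_col A"
  shows "diagonal_mat (top_left k A)"
  using assms by (auto simp: diagonal_mat_def top_left_def)

lemma index_mult_mat_sum:
  assumes "i < dim_row X" "j < dim_col Y" "dim_col X = dim_row Y"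
  shows "(X * Y) $$ (i,j) = (\<Sum>k<dim_col X. X $$ (i,k) * Y $$ (k,j))"
  using assms by (simp add: scalar_prod_def lessThan_atLeast0)

lemma index_mult_transpose_sum:
  assumes "i < dim_row X" "j < dim_row Y" "dim_col X = dim_col Y"
  shows "(X * transpose_mat Y) $$ (i,j) = (\<Sum>k<dim_col X. X $$ (i,k) * Y $$ (j,k))"
  using assms by (simp add: scalar_prod_def lessThan_atLeast0)

lemma sum_square_residual_orthogonal:
  fixes a :: real and b :: "nat \<Rightarrow> nat \<Rightarrow> real"
  assumes orth: "\<And>j l. j < n \<Longrightarrow> l < n \<Longrightarrow> j \<noteq> l \<Longrightarrow> (\<Sum>k<p. b j k * b l k) = 0"
  shows "(\<Sum>k<p. (c k - a * (\<Sum>j<n. d j * b j k))^2)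
    = (\<Sum>k<p. (c k)^2)
      + (\<Sum>j<n. (a * d j)^2 * (\<Sum>k<p. (b j k)^2) - 2 * a * d j * (\<Sum>k<p. c k * b j k))"
proof -
  define y where "y k = (\<Sum>j<n. d j * b j k)" for k
  have square: "(\<Sum>k<p. (y k)^2) = (\<Sum>j<n. (d j)^2 * (\<Sum>k<p. (b j k)^2))"
  proof -
    have "(\<Sum>k<p. (y k)^2) = (\<Sum>j<n. \<Sum>l<n. d j * d l * (\<Sum>k<p. b j k * b l k))"
      by (simp add: y_def power2_eq_square sum_product sum_distrib_left sum.swap[of _ "{..<p}"]
          algebra_simps)
    also have "\<dots> = (\<Sum>j<n. \<Sum>l<n. if l = j then d j * d j * (\<Sum>k<p. b j k * b j k) else 0)"
      using orth by (intro sum.cong refl) auto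
    finally show ?thesis by (simp add: power2_eq_square)
  qed
  have cross: "(\<Sum>k<p. c k * y k) = (\<Sum>j<n. d j * (\<Sum>k<p. c k * b j k))"
    by (simp add: y_def sum_distrib_left sum.swap[of _ "{..<p}"] algebra_simps)
  have "(\<Sum>k<p. (c k - a * y k)^2)
     = (\<Sum>k<p. (c k)^2) - 2 * a * (\<Sum>k<p. c k * y k) + a^2 * (\<Sum>k<p. (y k)^2)"
    by (simp add: power2_diff sum.distrib sum_subtractf sum_distrib_left
        algebra_simps)
  also have "\<dots> = (\<Sum>k<p. (c k)^2)
      + (\<Sum>j<n. (a * d j)^2 * (\<Sum>k<p. (b j k)^2) - 2 * a * d j * (\<Sum>k<p. c k * b j k))"
    unfolding square cross by (simp add: sum_distrib_left sum_subtractf algebra_simps)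
  finally show ?thesis by (simp add: y_def)
qed

definition entry_cost ::
    "real mat \<Rightarrow> real mat \<Rightarrow> real mat \<Rightarrow> nat \<Rightarrow> nat \<Rightarrow> real \<Rightarrow> real" where
  "entry_cost C A B i j x =
     (A $$ (i,i) * x)^2 * (B * transpose_mat B) $$ (j,j)
     - 2 * A $$ (i,i) * x * (C * transpose_mat B) $$ (i,j)"

lemma ls_obj_separable:
  assumes dims: "A \<in> carrier_mat m m" "B \<in> carrier_mat m p" "C \<in> carrier_mat m p"
      "D \<in> carrier_mat m m"
    and "diagonal_mat A" and "diagonal_mat (B * transpose_mat B)"
  shows "ls_obj C A B D = frob_sq C + (\<Sum>i<m. \<Sum>j<m. entry_cost C A B i j (D $$ (i,j)))"
proof -
  have orth: "(\<Sum>k<p. B $$ (j,k) * B $$ (l,k)) = 0" if "j < m" "l < m" "j \<noteq> l" for j l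
  proof -
    have "(B * transpose_mat B) $$ (j,l) = 0"
      using assms that by (simp add: diagonal_mat_def del: index_mult_mat(1))
    then show ?thesis
      using dims that by (simp add: index_mult_transpose_sum del: index_mult_mat(1))
  qed
  have AD: "(A * D) $$ (i,j) = A $$ (i,i) * D $$ (i,j)" if "i < m" "j < m" for i j
  proof -
    have "(A * D) $$ (i,j) = (\<Sum>l<m. A $$ (i,l) * D $$ (l,j))"
      using dims that by (simp add: index_mult_mat_sum del: index_mult_mat(1))
    also have "\<dots> = (\<Sum>l<m. if l = i then A $$ (i,i) * D $$ (i,j) else 0)"
      using assms that by (intro sum.cong refl) (auto simp: diagonal_mat_def)
    finally show ?thesis using that by simp
  qed
  have residual:
    "(C - A * D * B) $$ (i,k) = C $$ (i,k) - A $$ (i,i) * (\<Sum>j<m. D $$ (i,j) * B $$ (j,k))"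
    if "i < m" "k < p" for i k
  proof -
    have "(A * D * B) $$ (i,k) = (\<Sum>j<m. (A * D) $$ (i,j) * B $$ (j,k))"
      using dims that by (subst index_mult_mat_sum) auto
    also have "\<dots> = A $$ (i,i) * (\<Sum>j<m. D $$ (i,j) * B $$ (j,k))"
      using that by (simp add: AD sum_distrib_left mult.assoc)
    finally show ?thesis using dims that by simp
  qed
  have "ls_obj C A B D
      = (\<Sum>i<m. \<Sum>k<p. (C $$ (i,k) - A $$ (i,i) * (\<Sum>j<m. D $$ (i,j) * B $$ (j,k)))^2)"
  proof -
    have "dim_row (C - A * D * B) = m" "dim_col (C - A * D * B) = p"
      using dims by auto
    then show ?thesis
      unfolding ls_obj_def frob_sq_def
      by (simp only:) (intro sum.cong refl, simp only: residual lessThan_iff)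
  qed
  also have "\<dots> = (\<Sum>i<m. (\<Sum>k<p. (C $$ (i,k))^2) + (\<Sum>j<m. entry_cost C A B i j (D $$ (i,j))))"
    using dims by (intro sum.cong refl, subst sum_square_residual_orthogonal)
      (auto simp: orth entry_cost_def index_mult_transpose_sum power2_eq_square
        simp del: index_mult_mat(1))
  finally show ?thesis
    using dims by (simp add: frob_sq_def sum.distrib)
qed

lemma ls_obj_first_rows_separable:
  assumes "A \<in> carrier_mat m m" "B \<in> carrier_mat m p" "C \<in> carrier_mat m p"
    and "diagonal_mat A" "diagonal_mat (B * transpose_mat B)"
    and "k \<le> m" "D \<in> carrier_mat k k"
  shows "ls_obj (first_rows k C) (top_left k A) (first_rows k B) D
    = frob_sq (first_rows k C) + (\<Sum>i<k. \<Sum>j<k. entry_cost C A B i j (D $$ (i,j)))"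
proof -
  have gram: "first_rows k B * transpose_mat (first_rows k B) = top_left k (B * transpose_mat B)"
    and cross: "first_rows k C * transpose_mat (first_rows k B) = top_left k (C * transpose_mat B)"
    using assms by (auto intro: first_rows_mult_transpose)
  have "diagonal_mat (top_left k A)" "diagonal_mat (first_rows k B * transpose_mat (first_rows k B))"
    using assms unfolding gram by (auto intro!: diagonal_mat_top_left)
  moreover have
    "entry_cost (first_rows k C) (top_left k A) (first_rows k B) i j x = entry_cost C A B i j x"
    if "i < k" "j < k" for i j x
    using that unfolding entry_cost_def gram cross by simp
  ultimately show ?thesis
    using assms by (subst ls_obj_separable[where m = k and p = p]) auto
qed

definition replace_top_left :: "'a mat \<Rightarrow> 'a mat \<Rightarrow> 'a mat" where
  "replace_top_left D M = mat (dim_row M) (dim_col M)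
     (\<lambda>(i,j). if i < dim_row D \<and> j < dim_col D then D $$ (i,j) else M $$ (i,j))"

lemma top_left_replace_top_left:
  "D \<in> carrier_mat k k \<Longrightarrow> M \<in> carrier_mat m m \<Longrightarrow> k \<le> m \<Longrightarrow>
    top_left k (replace_top_left D M) = D"
  by (intro eq_matI) (auto simp: replace_top_left_def)

lemma feasible_index:
  assumes "feasible s m D" "i < m" "j < m"
  shows "D $$ (j,i) = s * D $$ (i,j)"
proof -
  have "D \<in> carrier_mat m m" "transpose_mat D = s \<cdot>\<^sub>m D"
    using assms(1) unfolding feasible_def by auto
  then have "transpose_mat D $$ (i,j) = (s \<cdot>\<^sub>m D) $$ (i,j)" by simp
  then show ?thesis
    using \<open>D \<in> carrier_mat m m\<close> assms(2,3) by simp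
qed

lemma feasible_top_left:
  assumes "feasible s m D" "k \<le> m"
  shows "feasible s k (top_left k D)"
  unfolding feasible_def
proof (intro conjI eq_matI)
  fix i j assume "i < dim_row (s \<cdot>\<^sub>m top_left k D)" "j < dim_col (s \<cdot>\<^sub>m top_left k D)"
  then show "transpose_mat (top_left k D) $$ (i,j) = (s \<cdot>\<^sub>m top_left k D) $$ (i,j)"
    using assms feasible_index[OF assms(1), of i j] by simp
qed auto

lemma feasible_replace_top_left:
  assumes "feasible s k D" "feasible s m M" "k \<le> m"
  shows "feasible s m (replace_top_left D M)"
  unfolding feasible_def
proof (intro conjI eq_matI)
  have "D \<in> carrier_mat k k" "M \<in> carrier_mat m m"
    using assms unfolding feasible_def by auto
  moreover fix i j
  assume "i < dim_row (s \<cdot>\<^sub>m replace_top_left D M)" "j < dim_col (s \<cdot>\<^sub>m replace_top_left D M)"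
  ultimately show
    "transpose_mat (replace_top_left D M) $$ (i,j) = (s \<cdot>\<^sub>m replace_top_left D M) $$ (i,j)"
    using feasible_index[OF assms(1), of i j] feasible_index[OF assms(2), of i j]
    by (auto simp: replace_top_left_def)
qed (use assms in \<open>auto simp: feasible_def replace_top_left_def\<close>)

lemma double_sum_diff_top_left_block:
  fixes g h :: "nat \<Rightarrow> nat \<Rightarrow> 'a :: ab_group_add"
  assumes "k \<le> n"
    and "\<And>i j. i < n \<Longrightarrow> j < n \<Longrightarrow> \<not> (i < k \<and> j < k) \<Longrightarrow> g i j = h i j"
  shows "(\<Sum>i<n. \<Sum>j<n. g i j) - (\<Sum>i<n. \<Sum>j<n. h i j)
    = (\<Sum>i<k. \<Sum>j<k. g i j) - (\<Sum>i<k. \<Sum>j<k. h i j)"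
proof -
  have "(\<Sum>i<n. \<Sum>j<n. g i j) - (\<Sum>i<n. \<Sum>j<n. h i j) = (\<Sum>i<n. \<Sum>j<n. g i j - h i j)"
    by (simp add: sum_subtractf)
  also have "\<dots> = (\<Sum>i<k. \<Sum>j<n. g i j - h i j)"
    using assms by (intro sum.mono_neutral_right) auto
  also have "\<dots> = (\<Sum>i<k. \<Sum>j<k. g i j - h i j)"
    using assms by (intro sum.cong refl sum.mono_neutral_right) auto
  finally show ?thesis
    by (simp add: sum_subtractf)
qed

lemma is_unique_argmin_top_left:
  fixes f :: "nat \<Rightarrow> nat \<Rightarrow> real \<Rightarrow> real"
  assumes min: "is_unique_argmin C A B s m Dh" and "k \<le> m"
    and obj: "\<And>D. D \<in> carrier_mat m m \<Longrightarrow>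
      ls_obj C A B D = c + (\<Sum>i<m. \<Sum>j<m. f i j (D $$ (i,j)))"
    and obj': "\<And>D. D \<in> carrier_mat k k \<Longrightarrow>
      ls_obj C' A' B' D = c' + (\<Sum>i<k. \<Sum>j<k. f i j (D $$ (i,j)))"
  shows "is_unique_argmin C' A' B' s k (top_left k Dh)"
proof -
  have Dh: "feasible s m Dh" "Dh \<in> carrier_mat m m"
    using min unfolding is_unique_argmin_def feasible_def by auto
  have gain: "ls_obj C A B (replace_top_left D Dh) - ls_obj C A B Dh
      = ls_obj C' A' B' D - ls_obj C' A' B' (top_left k Dh)"
    if D: "D \<in> carrier_mat k k" for D
  proof -
    have "replace_top_left D Dh \<in> carrier_mat m m"
      using Dh by (simp add: replace_top_left_def)
    then have "ls_obj C A B (replace_top_left D Dh) - ls_obj C A B Dh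
        = (\<Sum>i<m. \<Sum>j<m. f i j (replace_top_left D Dh $$ (i,j)))
          - (\<Sum>i<m. \<Sum>j<m. f i j (Dh $$ (i,j)))"
      using Dh by (simp add: obj)
    also have "\<dots> = (\<Sum>i<k. \<Sum>j<k. f i j (replace_top_left D Dh $$ (i,j)))
        - (\<Sum>i<k. \<Sum>j<k. f i j (Dh $$ (i,j)))"
      using \<open>k \<le> m\<close> D Dh
      by (intro double_sum_diff_top_left_block) (auto simp: replace_top_left_def)
    also have "\<dots> = (\<Sum>i<k. \<Sum>j<k. f i j (D $$ (i,j)))
        - (\<Sum>i<k. \<Sum>j<k. f i j (top_left k Dh $$ (i,j)))"
      using \<open>k \<le> m\<close> D Dh
      by (auto simp: replace_top_left_def intro!: arg_cong2[where f = minus] sum.cong)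
    also have "\<dots> = ls_obj C' A' B' D - ls_obj C' A' B' (top_left k Dh)"
      using obj'[OF D] obj'[of "top_left k Dh"] by simp
    finally show ?thesis .
  qed
  have extend: "feasible s m (replace_top_left D Dh)" "D \<in> carrier_mat k k"
    if "feasible s k D" for D
    using feasible_replace_top_left[OF that Dh(1) \<open>k \<le> m\<close>] that
    by (simp_all add: feasible_def)
  show ?thesis
    unfolding is_unique_argmin_def
  proof (intro conjI allI impI)
    show "feasible s k (top_left k Dh)"
      using Dh(1) \<open>k \<le> m\<close> by (rule feasible_top_left)
  next
    fix D assume "feasible s k D"
    then have "ls_obj C A B Dh \<le> ls_obj C A B (replace_top_left D Dh)"
      using min extend unfolding is_unique_argmin_def by blast
    then show "ls_obj C' A' B' (top_left k Dh) \<le> ls_obj C' A' B' D"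
      using gain extend \<open>feasible s k D\<close> by fastforce
  next
    fix D assume "feasible s k D" "ls_obj C' A' B' D \<le> ls_obj C' A' B' (top_left k Dh)"
    then have "ls_obj C A B (replace_top_left D Dh) \<le> ls_obj C A B Dh"
      using gain extend by fastforce
    then have "replace_top_left D Dh = Dh"
      using min extend \<open>feasible s k D\<close> unfolding is_unique_argmin_def by blast
    then show "D = top_left k Dh"
      using Dh(2) \<open>k \<le> m\<close> extend \<open>feasible s k D\<close> top_left_replace_top_left by metis
  qed
qed

theorem proposition2:
  fixes A B C U X Dh :: "real mat" and N n ns n' :: nat and s :: real
  assumes "A \<in> carrier_mat N N" "B \<in> carrier_mat N ns" "C \<in> carrier_mat N ns"
    and "s = 1 \<or> s = -1"
    and "is_POD_basis U X N n"
    and "is_unique_argmin (transpose_mat U * C) (transpose_mat U * A * U)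
           (transpose_mat U * B) s n Dh"
    and "n' < n"
    and "diagonal_mat (transpose_mat U * A * U)"
    and "diagonal_mat ((transpose_mat U * B) * transpose_mat (transpose_mat U * B))"
  shows "is_unique_argmin (transpose_mat (first_cols n' U) * C)
           (transpose_mat (first_cols n' U) * A * first_cols n' U)
           (transpose_mat (first_cols n' U) * B) s n' (top_left n' Dh)"
proof -
  obtain W where "W \<in> carrier_mat N N" "U = first_cols n W"
    using assms(5) unfolding is_POD_basis_def by blast
  then have U: "U \<in> carrier_mat N n" by auto
  define Ah Bh Ch where "Ah = transpose_mat U * A * U" and "Bh = transpose_mat U * B"
    and "Ch = transpose_mat U * C"
  have hats: "Ah \<in> carrier_mat n n" "Bh \<in> carrier_mat n ns" "Ch \<in> carrier_mat n ns"
    using U assms(1-3) by (auto simp: Ah_def Bh_def Ch_def)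
  have "n' \<le> dim_col U" using U \<open>n' < n\<close> by simp
  then have truncated:
    "transpose_mat (first_cols n' U) * A * first_cols n' U = top_left n' Ah"
    "transpose_mat (first_cols n' U) * B = first_rows n' Bh"
    "transpose_mat (first_cols n' U) * C = first_rows n' Ch"
    unfolding Ah_def Bh_def Ch_def by (rule compress_first_cols transpose_first_cols_mult)+
  show ?thesis
    unfolding truncated
  proof (rule is_unique_argmin_top_left[where f = "entry_cost Ch Ah Bh"])
    show "is_unique_argmin Ch Ah Bh s n Dh" "n' \<le> n"
      using assms(6,7) by (simp_all add: Ah_def Bh_def Ch_def)
    show "ls_obj Ch Ah Bh D
      = frob_sq Ch + (\<Sum>i<n. \<Sum>j<n. entry_cost Ch Ah Bh i j (D $$ (i,j)))"
      if "D \<in> carrier_mat n n" for D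
      using ls_obj_separable[OF hats that] assms(8,9) by (simp add: Ah_def Bh_def)
    show "ls_obj (first_rows n' Ch) (top_left n' Ah) (first_rows n' Bh) D
      = frob_sq (first_rows n' Ch) + (\<Sum>i<n'. \<Sum>j<n'. entry_cost Ch Ah Bh i j (D $$ (i,j)))"
      if "D \<in> carrier_mat n' n'" for D
      using ls_obj_first_rows_separable[OF hats _ _ _ that] assms(8,9) \<open>n' < n\<close>
      by (simp add: Ah_def Bh_def)
  qed
qed

end
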